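(* Let $D$ be a squarefree integer and let $p>3$ be a prime dividing $D$. Then $C_D(\mathbb{Q}_p)\neq\emptyset$ if and only if $p\equiv1\pmod{24}$.
   Context: $C_D\subset\mathbb{P}^4$ is the curve over $\mathbb{Q}$ given by $X_0^2-2X_1^2+X_2^2=0$, $X_1^2-2X_2^2+DX_3^2=0$, $X_2^2-2DX_3^2+X_4^2=0$. *)

theory Defs
  imports "HOL-Number_Theory.Number_Theory" "HOL-Computational_Algebra.Squarefree"
begin

text \<open>p-adic integers as the inverse limit of Z/p^k Z: an element is represented by a
  sequence a with a k read modulo p^k and compatibility a (k+1) = a k mod p^k.\<close>
definition padic_integer :: "nat \<Rightarrow> (nat \<Rightarrow> int) \<Rightarrow> bool" where
  "padic_integer p a \<longleftrightarrow> (\<forall>k. [a (Suc k) = a k] (mod (int p ^ k)))"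

text \<open>C_D(Q_p) is nonempty iff there is a point of P^4(Q_p) on C_D; every point of
  P^4(Q_p) has a primitive representative in Z_p^5 (some coordinate a unit), and a
  polynomial identity with integer coefficients holds in Z_p iff it holds mod p^k for all k.\<close>
definition C_D_has_Qp_point :: "int \<Rightarrow> nat \<Rightarrow> bool" where
  "C_D_has_Qp_point D p \<longleftrightarrow>
     (\<exists>x :: nat \<Rightarrow> nat \<Rightarrow> int.
        (\<forall>i<5. padic_integer p (x i)) \<and>
        (\<exists>i<5. \<not> int p dvd x i 1) \<and>
        (\<forall>k. [(x 0 k)^2 - 2 * (x 1 k)^2 + (x 2 k)^2 = 0] (mod (int p ^ k)) \<and>
             [(x 1 k)^2 - 2 * (x 2 k)^2 + D * (x 3 k)^2 = 0] (mod (int p ^ k)) \<and>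
             [(x 2 k)^2 - 2 * D * (x 3 k)^2 + (x 4 k)^2 = 0] (mod (int p ^ k))))"

end

theory Submission
  imports Defs
begin

text \<open>Reduce a primitive point modulo p. Since p divides D, the equations become
  x1^2 = 2 x2^2, x4^2 = -x2^2 and then x0^2 = 3 x2^2. If p divided x2, it would divide x0, x1 and x4,
  so x3 would be a unit, and the second equation modulo p^2 would give p^2 | D, contradicting
  squarefreeness. So x2 is a unit and -1, 2, 3 are squares modulo p. Conversely, if they are,
  Hensel's lemma lifts the square roots to Z_p and (sqrt 3 : sqrt 2 : 1 : 0 : sqrt -1) lies on C_D.
  Finally, -1, 2 and 3 are all squares modulo p iff F_p^* has an element of order 24: from i, sqrt 2
  and sqrt 3 one builds (1 + i)/sqrt 2 of order 8 and (i sqrt 3 - 1)/2 of order 3, and conversely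
  i, sqrt 2 and sqrt 3 are polynomials in a primitive 24th root of unity.\<close>

lemma prime_gt_3_not_dvd_divisor_12:
  fixes c :: int
  assumes "prime p" "p > 3" "c dvd 12"
  shows "\<not> int p dvd c"
proof
  assume "int p dvd c"
  with assms(3) have "p dvd 2 ^ 2 * 3"
    by (metis dvd_trans int_dvd_int_iff of_nat_numeral numeral_Bit0_eq_double power2_eq_square
        mult_2 numeral_times_numeral semiring_norm)
  hence "p dvd 2 \<or> p dvd 3"
    using assms(1) by (metis prime_dvd_mult_iff prime_dvd_power)
  thus False
    using assms(2) by (auto dest: dvd_imp_le)
qed

lemma cong_square_mult_inverse:
  fixes y u v c m :: int
  assumes "[y^2 = c * u^2] (mod m)" "[u * v = 1] (mod m)"
  shows "[(y * v)^2 = c] (mod m)"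
proof -
  have "[(y * v)^2 = c * u^2 * v^2] (mod m)"
    using cong_scalar_right[OF assms(1), of "v^2"] by (simp add: power_mult_distrib)
  also have "c * u^2 * v^2 = c * (u * v)^2"
    by (simp add: power_mult_distrib)
  also have "[c * (u * v)^2 = c * 1^2] (mod m)"
    using assms(2) by (intro cong_scalar_left cong_pow)
  finally show ?thesis
    by simp
qed

lemma exact_order_dvd_prime_minus_one:
  fixes z :: int
  assumes "prime p" "n > 0" "[z ^ n = 1] (mod int p)"
    and "\<And>d. d dvd n \<Longrightarrow> d < n \<Longrightarrow> \<not> [z ^ d = 1] (mod int p)"
  shows "n dvd p - 1"
proof -
  define w where "w = nat (z mod int p)"
  have w_pow: "[w ^ d = 1] (mod p) \<longleftrightarrow> [z ^ d = 1] (mod int p)" for d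
  proof -
    have "int w = z mod int p"
      using assms(1) by (simp add: w_def prime_gt_0_nat)
    hence "[w ^ d = 1] (mod p) \<longleftrightarrow> [(z mod int p) ^ d = 1] (mod int p)"
      by (metis cong_int_iff of_nat_1 of_nat_power)
    also have "\<dots> \<longleftrightarrow> [z ^ d = 1] (mod int p)"
      by (simp add: cong_def power_mod)
    finally show ?thesis .
  qed
  have "ord p w dvd n"
    using assms(3) w_pow by (simp add: ord_divides')
  moreover have "\<not> ord p w < n"
    using assms(4) w_pow ord[of w p] \<open>ord p w dvd n\<close> by blast
  ultimately have "ord p w = n"
    using assms(2) dvd_imp_le by fastforce
  hence "n dvd totient p"
    using assms(2) by (metis order_divides_totient ord_gt_0_iff)
  thus ?thesis
    using assms(1) by (simp add: totient_prime)
qed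

lemma prime_exists_exact_order:
  assumes "prime p" "n dvd p - 1"
  shows "\<exists>z::int. [z ^ n = 1] (mod int p) \<and> (\<forall>d. 0 < d \<longrightarrow> d < n \<longrightarrow> \<not> [z ^ d = 1] (mod int p))"
proof -
  obtain e where e: "p - 1 = n * e"
    using assms(2) by blast
  have "e > 0"
    using e assms(1) prime_gt_1_nat[of p] by (cases e) auto
  obtain g where "residue_primroot p g"
    using prime_primitive_root_exists[OF prime_gt_1_nat[OF assms(1)] assms(1)] by blast
  hence ord_g: "ord p g = n * e"
    using e assms(1) by (simp add: residue_primroot_def totient_prime)
  define z where "z = int (g ^ e)"
  have pow: "[z ^ d = 1] (mod int p) \<longleftrightarrow> n dvd d" for d
  proof -
    have "[z ^ d = 1] (mod int p) \<longleftrightarrow> [g ^ (e * d) = 1] (mod p)"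
      unfolding z_def by (metis cong_int_iff of_nat_1 of_nat_power power_mult)
    also have "\<dots> \<longleftrightarrow> n dvd d"
      using \<open>e > 0\<close> by (simp add: ord_divides' ord_g mult.commute)
    finally show ?thesis .
  qed
  show ?thesis
    using pow by (metis dvd_imp_le dvd_refl linorder_not_le)
qed

lemma eight_dvd_prime_minus_one:
  fixes z :: int
  assumes "prime p" "p > 3" "int p dvd z ^ 4 + 1"
  shows "8 dvd p - 1"
proof (rule exact_order_dvd_prime_minus_one[OF assms(1)])
  have "z ^ 8 - 1 = (z ^ 4 + 1) * (z ^ 4 - 1)"
    by (simp add: algebra_simps eval_nat_numeral)
  thus "[z ^ 8 = 1] (mod int p)"
    using assms(3) by (simp add: cong_iff_dvd_diff)
next
  fix d :: nat
  assume "d dvd 8" "d < 8"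
  moreover have "d \<in> {0, 1, 2, 3, 4, 5, 6, 7}"
    using \<open>d < 8\<close> by auto
  ultimately have "d dvd 4"
    by auto
  then obtain k where "4 = d * k" ..
  show "\<not> [z ^ d = 1] (mod int p)"
  proof
    assume "[z ^ d = 1] (mod int p)"
    hence "[z ^ 4 = 1] (mod int p)"
      using \<open>4 = d * k\<close> by (metis cong_pow power_mult power_one)
    hence "int p dvd (z ^ 4 + 1) - (z ^ 4 - 1)"
      using assms(3) by (metis cong_iff_dvd_diff dvd_diff)
    thus False
      using prime_gt_3_not_dvd_divisor_12[OF assms(1,2), of 2] by simp
  qed
qed simp

lemma three_dvd_prime_minus_one:
  fixes z :: int
  assumes "prime p" "int p dvd z ^ 2 + z + 1" "\<not> int p dvd z - 1"
  shows "3 dvd p - 1"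
proof (rule exact_order_dvd_prime_minus_one[OF assms(1)])
  have "z ^ 3 - 1 = (z ^ 2 + z + 1) * (z - 1)"
    by (simp add: algebra_simps eval_nat_numeral)
  thus "[z ^ 3 = 1] (mod int p)"
    using assms(2) by (simp add: cong_iff_dvd_diff)
next
  fix d :: nat
  assume "d dvd 3" "d < 3"
  moreover have "d \<in> {0, 1, 2}"
    using \<open>d < 3\<close> by auto
  ultimately have "d = 1"
    by auto
  thus "\<not> [z ^ d = 1] (mod int p)"
    using assms(3) by (simp add: cong_iff_dvd_diff)
qed simp

lemma QuadRes_minus_one_two_three_imp_cong_1_mod_24:
  assumes p: "prime p" "p > 3"
    and "QuadRes (int p) (-1)" "QuadRes (int p) 2" "QuadRes (int p) 3"
  shows "[p = 1] (mod 24)"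
proof -
  define P where "P = int p"
  obtain i s t where I: "P dvd i^2 + 1" and S: "P dvd s^2 - 2" and T: "P dvd t^2 - 3"
    using assms(3-5) unfolding QuadRes_def P_def by (auto simp: cong_iff_dvd_diff)
  have "odd P"
    using p prime_odd_nat unfolding P_def by simp
  then obtain k where "P = 2 * k + 1"
    using oddE by blast
  \<comment> \<open>With h = 1/2 mod p, \<zeta> = (1 + i)/sqrt 2 has order 8 and \<omega> = (i sqrt 3 - 1)/2 has order 3.\<close>
  define h where "h = k + 1"
  have H: "P dvd 2 * h - 1"
    using \<open>P = 2 * k + 1\<close> by (simp add: h_def add.commute)
  have not_dvd_12: "\<not> P dvd 12"
    using prime_gt_3_not_dvd_divisor_12[OF p] unfolding P_def by simp
  define \<zeta> where "\<zeta> = (1 + i) * s * h"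
  have "P dvd (i^2 + 1) * (s^2 * h^2) + (s^2 - 2) * (2 * i * h^2) + (2 * h - 1) * (i * (2 * h + 1))"
    using I S H by (meson dvd_add dvd_mult2)
  also have "\<dots> = \<zeta>^2 - i"
    unfolding \<zeta>_def by (simp add: algebra_simps eval_nat_numeral)
  finally have "P dvd (\<zeta>^2 - i) * (\<zeta>^2 + i) + (i^2 + 1)"
    using I by (meson dvd_add dvd_mult2)
  also have "\<dots> = \<zeta>^4 + 1"
    by (simp add: algebra_simps eval_nat_numeral)
  finally have "P dvd \<zeta>^4 + 1" .
  hence "8 dvd p - 1"
    using eight_dvd_prime_minus_one[OF p] unfolding P_def by blast
  define u where "u = t * i - 1"
  define \<omega> where "\<omega> = u * h"
  have "P dvd (2 * h - 1) * (u^2 * (2 * h + 1) + 2 * u) + (i^2 + 1) * t^2 - (t^2 - 3)"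
    using I T H by (meson dvd_add dvd_diff dvd_mult2)
  also have "\<dots> = 4 * (\<omega>^2 + \<omega> + 1)"
    unfolding \<omega>_def u_def by (simp add: algebra_simps eval_nat_numeral)
  finally have "P dvd 4 * (\<omega>^2 + \<omega> + 1)" .
  moreover have "\<not> P dvd 4"
    using not_dvd_12 dvd_trans[of P 4 12] by auto
  moreover have "prime P"
    using p(1) unfolding P_def by simp
  ultimately have "P dvd \<omega>^2 + \<omega> + 1"
    using prime_dvd_mult_iff by blast
  moreover have "\<not> P dvd \<omega> - 1"
  proof
    assume "P dvd \<omega> - 1"
    hence "P dvd 2 * (\<omega> - 1) - (2 * h - 1) * u"
      using H by (meson dvd_diff dvd_mult dvd_mult2)
    also have "\<dots> = t * i - 3"
      unfolding \<omega>_def u_def by (simp add: algebra_simps)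
    finally have "P dvd (i^2 + 1) * t^2 - (t^2 - 3) - (t * i - 3) * (t * i + 3)"
      using I T by (meson dvd_diff dvd_mult2)
    also have "\<dots> = 12"
      by (simp add: algebra_simps eval_nat_numeral)
    finally show False
      using not_dvd_12 by blast
  qed
  ultimately have "3 dvd p - 1"
    using three_dvd_prime_minus_one p(1) unfolding P_def by blast
  with \<open>8 dvd p - 1\<close> have "24 dvd p - 1"
    by presburger
  thus ?thesis
    using p by (simp add: cong_altdef_nat)
qed

lemma cong_1_mod_24_imp_QuadRes_minus_one_two_three:
  assumes "prime p" "[p = 1] (mod 24)"
  shows "QuadRes (int p) (-1) \<and> QuadRes (int p) 2 \<and> QuadRes (int p) 3"
proof -
  have "24 dvd p - 1"
    using assms prime_gt_1_nat[of p] by (simp add: cong_altdef_nat)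
  then obtain z :: int where z24: "[z ^ 24 = 1] (mod int p)"
    and z_ne: "\<And>d. 0 < d \<Longrightarrow> d < 24 \<Longrightarrow> \<not> [z ^ d = 1] (mod int p)"
    using prime_exists_exact_order[OF assms(1)] by blast
  have P: "prime (int p)"
    using assms(1) by simp
  have "z^24 - 1 = (z^12 - 1) * (z^12 + 1)"
    by (simp add: algebra_simps eval_nat_numeral)
  moreover have "\<not> int p dvd z^12 - 1"
    using z_ne[of 12] by (simp add: cong_iff_dvd_diff)
  ultimately have A: "int p dvd z^12 + 1"
    using z24 P by (simp add: cong_iff_dvd_diff prime_dvd_mult_iff)
  have "z^24 - 1 = (z^8 - 1) * (z^16 + z^8 + 1)"
    by (simp add: algebra_simps eval_nat_numeral)
  moreover have "\<not> int p dvd z^8 - 1"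
    using z_ne[of 8] by (simp add: cong_iff_dvd_diff)
  ultimately have B: "int p dvd z^16 + z^8 + 1"
    using z24 P by (simp add: cong_iff_dvd_diff prime_dvd_mult_iff)
  \<comment> \<open>i = z^6, sqrt 2 = \<zeta>8 + 1/\<zeta>8 = z^3 + z^21 and sqrt 3 = i (2 \<omega> + 1) with \<omega> = z^8\<close>
  have "(z^6)^2 + 1 = z^12 + 1"
    by (simp flip: power_mult)
  hence "[(z^6)^2 = -1] (mod int p)"
    using A by (simp add: cong_iff_dvd_diff)
  moreover have "(z^3 + z^21)^2 - 2 = (z^12 + 1) * (z^6 + 2 * (z^12 - 1) + z^18 * (z^12 - 1))"
    by (simp add: power2_eq_square algebra_simps flip: power_add)
  hence "[(z^3 + z^21)^2 = 2] (mod int p)"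
    using A by (simp add: cong_iff_dvd_diff)
  moreover have "(z^6 * (2 * z^8 + 1))^2 - 3 = 4 * z^12 * (z^16 + z^8 + 1) - 3 * (z^12 + 1)"
    by (simp add: power2_eq_square algebra_simps flip: power_add)
  hence "int p dvd (z^6 * (2 * z^8 + 1))^2 - 3"
    using A B by (metis dvd_diff dvd_mult)
  hence "[(z^6 * (2 * z^8 + 1))^2 = 3] (mod int p)"
    by (simp add: cong_iff_dvd_diff)
  ultimately show ?thesis
    unfolding QuadRes_def by blast
qed

lemma QuadRes_minus_one_two_three_iff_cong_1_mod_24:
  assumes "prime p" "p > 3"
  shows "QuadRes (int p) (-1) \<and> QuadRes (int p) 2 \<and> QuadRes (int p) 3 \<longleftrightarrow> [p = 1] (mod 24)"
  using QuadRes_minus_one_two_three_imp_cong_1_mod_24[OF assms]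
    cong_1_mod_24_imp_QuadRes_minus_one_two_three[OF assms(1)] by blast

lemma hensel_step_square:
  fixes P a t :: int
  assumes "prime P" "\<not> P dvd 2" "n > 0" "[t^2 = a] (mod P^n)" "\<not> P dvd t"
  shows "\<exists>t'. [t' = t] (mod P^n) \<and> [t'^2 = a] (mod P^Suc n)"
proof -
  obtain m where m: "t^2 - a = P^n * m"
    using assms(4) by (auto simp: cong_iff_dvd_diff dvd_def)
  have "\<not> P dvd 2 * t"
    using assms(1,2,5) prime_dvd_mult_iff by blast
  hence "coprime (2 * t) P"
    using assms(1) prime_imp_coprime coprime_commute by blast
  then obtain y where "[2 * t * y = 1] (mod P)"
    using cong_solve_coprime_int by blast
  \<comment> \<open>Newton's correction: c P^n approximates -(t^2 - a) / (2 t)\<close>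
  define c where "c = - m * y"
  have "m + 2 * t * c = - m * (2 * t * y - 1)"
    unfolding c_def by (simp add: algebra_simps)
  hence "P dvd m + 2 * t * c"
    using \<open>[2 * t * y = 1] (mod P)\<close> by (simp add: cong_iff_dvd_diff)
  then obtain q where q: "m + 2 * t * c = P * q" ..
  obtain r where r: "n = Suc r"
    using assms(3) gr0_implies_Suc by blast
  have "(t + c * P^n)^2 - a = P^n * (m + 2 * t * c) + c^2 * P^n * P^n"
    using m by (simp add: algebra_simps power2_eq_square)
  also have "\<dots> = P^Suc n * (q + c^2 * P^r)"
    using q r by (simp add: algebra_simps)
  finally show ?thesis
    by (intro exI[of _ "t + c * P^n"]) (simp add: cong_iff_dvd_diff)
qed

lemma QuadRes_imp_padic_sqrt:
  fixes a :: int
  assumes "prime p" "p \<noteq> 2" "\<not> int p dvd a" "QuadRes (int p) a"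
  shows "\<exists>s. padic_integer p s \<and> (\<forall>k. [s k ^ 2 = a] (mod int p ^ k))"
proof -
  define P where "P = int p"
  have "prime P"
    using assms(1) unfolding P_def by simp
  have "\<not> P dvd 2"
    using assms(1,2) unfolding P_def
    by (metis int_dvd_int_iff of_nat_numeral primes_dvd_imp_eq two_is_prime_nat)
  have lift: "\<exists>t'. [t'^2 = a] (mod P^Suc (Suc n)) \<and> [t' = t] (mod P^Suc n)"
    if t: "[t^2 = a] (mod P^Suc n)" for t n
  proof -
    have "[t^2 = a] (mod P)"
      using t by (rule cong_dvd_modulus) simp
    hence "\<not> P dvd t"
      using assms(3) unfolding P_def
      by (metis cong_dvd_iff cong_sym dvd_mult2 power2_eq_square)
    thus ?thesis
      using hensel_step_square[OF \<open>prime P\<close> \<open>\<not> P dvd 2\<close> _ t] by blast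
  qed
  obtain f where f: "\<And>n. [f n ^ 2 = a] (mod P^Suc n) \<and> [f (Suc n) = f n] (mod P^Suc n)"
    using dependent_nat_choice[of "\<lambda>n t. [t^2 = a] (mod P^Suc n)" "\<lambda>n t t'. [t' = t] (mod P^Suc n)"]
      lift assms(4) unfolding QuadRes_def P_def by auto
  have "P^k dvd P^Suc k" for k
    by simp
  hence "padic_integer p f \<and> (\<forall>k. [f k ^ 2 = a] (mod P^k))"
    unfolding padic_integer_def P_def[symmetric] using f cong_dvd_modulus by blast
  thus ?thesis
    unfolding P_def by blast
qed

definition on_C_D_mod :: "int \<Rightarrow> int \<Rightarrow> (nat \<Rightarrow> int) \<Rightarrow> bool" where
  "on_C_D_mod D m y \<longleftrightarrow>
     [(y 0)^2 - 2 * (y 1)^2 + (y 2)^2 = 0] (mod m) \<and>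
     [(y 1)^2 - 2 * (y 2)^2 + D * (y 3)^2 = 0] (mod m) \<and>
     [(y 2)^2 - 2 * D * (y 3)^2 + (y 4)^2 = 0] (mod m)"

lemma C_D_has_Qp_point_iff:
  "C_D_has_Qp_point D p \<longleftrightarrow>
     (\<exists>x. (\<forall>i<5. padic_integer p (x i)) \<and> (\<exists>i<5. \<not> int p dvd x i 1) \<and>
          (\<forall>k. on_C_D_mod D (int p ^ k) (\<lambda>i. x i k)))"
  unfolding C_D_has_Qp_point_def on_C_D_mod_def by blast

lemma on_C_D_mod_squares:
  assumes "m dvd D" "on_C_D_mod D m y"
  shows "[(y 0)^2 = 3 * (y 2)^2] (mod m)" "[(y 1)^2 = 2 * (y 2)^2] (mod m)"
    "[(y 4)^2 = -1 * (y 2)^2] (mod m)"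
proof -
  have D3: "m dvd D * (y 3)^2"
    using assms(1) by simp
  have "(y 1)^2 - 2 * (y 2)^2 = ((y 1)^2 - 2 * (y 2)^2 + D * (y 3)^2) - D * (y 3)^2"
    by simp
  hence "m dvd (y 1)^2 - 2 * (y 2)^2"
    using assms(2) D3 unfolding on_C_D_mod_def by (metis cong_0_iff dvd_diff)
  thus y1: "[(y 1)^2 = 2 * (y 2)^2] (mod m)"
    by (simp add: cong_iff_dvd_diff)
  have "(y 0)^2 - 3 * (y 2)^2 = ((y 0)^2 - 2 * (y 1)^2 + (y 2)^2) + 2 * ((y 1)^2 - 2 * (y 2)^2)"
    by simp
  thus "[(y 0)^2 = 3 * (y 2)^2] (mod m)"
    using assms(2) y1 unfolding on_C_D_mod_def
    by (metis cong_0_iff cong_iff_dvd_diff dvd_add dvd_mult)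
  have "(y 4)^2 - -1 * (y 2)^2 = ((y 2)^2 - 2 * D * (y 3)^2 + (y 4)^2) + 2 * (D * (y 3)^2)"
    by simp
  thus "[(y 4)^2 = -1 * (y 2)^2] (mod m)"
    using assms(2) D3 unfolding on_C_D_mod_def
    by (metis cong_0_iff cong_iff_dvd_diff dvd_add dvd_mult)
qed

lemma on_C_D_mod_imp_QuadRes:
  assumes "prime P" "P dvd D" "on_C_D_mod D P y" "\<not> P dvd y 2"
  shows "QuadRes P (-1) \<and> QuadRes P 2 \<and> QuadRes P 3"
proof -
  have "coprime (y 2) P"
    using assms(1,4) prime_imp_coprime coprime_commute by blast
  then obtain v where "[y 2 * v = 1] (mod P)"
    using cong_solve_coprime_int by blast
  thus ?thesis
    using on_C_D_mod_squares[OF assms(2,3)] unfolding QuadRes_def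
    by (metis cong_square_mult_inverse)
qed

lemma on_C_D_mod_squarefree_not_dvd:
  fixes D P :: int and y y' :: "nat \<Rightarrow> int"
  assumes "squarefree D" "prime P" "P dvd D"
    and "on_C_D_mod D P y" "on_C_D_mod D (P^2) y'" "\<forall>i<5. [y' i = y i] (mod P)"
    and "\<exists>i<5. \<not> P dvd y i"
  shows "\<not> P dvd y 2"
proof
  assume "P dvd y 2"
  have "P dvd c * (y 2)^2" for c
    using \<open>P dvd y 2\<close> by (simp add: power2_eq_square)
  hence "P dvd (y i)^2" if "i \<in> {0, 1, 4}" for i
    using that on_C_D_mod_squares[OF assms(3,4)] cong_dvd_iff by blast
  hence "P dvd y i" if "i \<in> {0, 1, 4}" for i
    using that assms(2) prime_dvd_power by blast
  hence "\<not> P dvd y 3"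
    using assms(7) \<open>P dvd y 2\<close> by (auto simp: less_Suc_eq numeral_eq_Suc)
  \<comment> \<open>modulo p^2 the second equation for y' reduces to D (y' 3)^2 = 0\<close>
  have "P dvd y' i" if "i \<in> {1, 2}" for i
  proof -
    have "[y' i = y i] (mod P)" "P dvd y i"
      using that assms(6) \<open>P dvd y 2\<close> \<open>\<And>i. i \<in> {0, 1, 4} \<Longrightarrow> P dvd y i\<close> by auto
    thus ?thesis
      using cong_dvd_iff by blast
  qed
  hence "P^2 dvd (y' 1)^2" "P^2 dvd 2 * (y' 2)^2"
    by (simp_all add: dvd_power_same)
  moreover have "P^2 dvd (y' 1)^2 - 2 * (y' 2)^2 + D * (y' 3)^2"
    using assms(5) unfolding on_C_D_mod_def by (simp add: cong_0_iff)
  ultimately have "P^2 dvd D * (y' 3)^2"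
    by (metis add_diff_cancel_left' diff_diff_eq2 dvd_diff)
  moreover have "\<not> P dvd y' 3"
    using assms(6) \<open>\<not> P dvd y 3\<close> cong_dvd_iff[of "y' 3" "y 3" P] by simp
  hence "coprime (P^2) ((y' 3)^2)"
    using assms(2) prime_imp_coprime by (metis coprime_power_left_iff coprime_power_right_iff)
  ultimately have "P^2 dvd D"
    using coprime_dvd_mult_left_iff by blast
  thus False
    using assms(1,2) not_prime_unit unfolding squarefree_def power2_eq_square by blast
qed

lemma C_D_has_Qp_point_imp_QuadRes:
  assumes "squarefree D" "prime p" "int p dvd D" "C_D_has_Qp_point D p"
  shows "QuadRes (int p) (-1) \<and> QuadRes (int p) 2 \<and> QuadRes (int p) 3"
proof -
  obtain x where padic: "\<forall>i<5. padic_integer p (x i)" and prim: "\<exists>i<5. \<not> int p dvd x i 1"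
    and on_C_D: "\<And>k. on_C_D_mod D (int p ^ k) (\<lambda>i. x i k)"
    using assms(4) unfolding C_D_has_Qp_point_iff by blast
  have "\<forall>i<5. [x i 2 = x i 1] (mod int p)"
    using padic unfolding padic_integer_def by (metis One_nat_def Suc_1 power_one_right)
  hence "\<not> int p dvd x 2 1"
    using on_C_D_mod_squarefree_not_dvd[OF assms(1) _ assms(3), of "\<lambda>i. x i 1" "\<lambda>i. x i 2"]
      on_C_D[of 1] on_C_D[of 2] prim assms(2) by simp
  thus ?thesis
    using on_C_D_mod_imp_QuadRes[of "int p" D "\<lambda>i. x i 1"] on_C_D[of 1] assms(2,3) by simp
qed

lemma QuadRes_imp_C_D_has_Qp_point:
  assumes "prime p" "p > 3" "QuadRes (int p) (-1)" "QuadRes (int p) 2" "QuadRes (int p) 3"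
  shows "C_D_has_Qp_point D p"
proof -
  have sqrt: "\<exists>s. padic_integer p s \<and> (\<forall>k. [s k ^ 2 = c] (mod int p ^ k))"
    if "c \<in> {-1, 2, 3}" "QuadRes (int p) c" for c
    using QuadRes_imp_padic_sqrt[OF assms(1) _ _ that(2)] that(1) assms(2)
      prime_gt_3_not_dvd_divisor_12[OF assms(1,2), of c] by auto
  obtain r where r: "padic_integer p r" "\<And>k. [r k ^ 2 = -1] (mod int p ^ k)"
    using sqrt[of "-1"] assms(3) by auto
  obtain s where s: "padic_integer p s" "\<And>k. [s k ^ 2 = 2] (mod int p ^ k)"
    using sqrt[of 2] assms(4) by auto
  obtain t where t: "padic_integer p t" "\<And>k. [t k ^ 2 = 3] (mod int p ^ k)"
    using sqrt[of 3] assms(5) by auto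
  define x where "x = (\<lambda>i k. [t k, s k, 1, 0, r k] ! i)"
  have "padic_integer p (x i)" if "i < 5" for i
    using that r(1) s(1) t(1) by (auto simp: x_def padic_integer_def less_Suc_eq numeral_eq_Suc)
  moreover have "\<not> int p dvd x 2 1"
    using assms(1,2) by (simp add: x_def)
  moreover have "on_C_D_mod D (int p ^ k) (\<lambda>i. x i k)" for k
  proof -
    have "[t k ^ 2 - 2 * s k ^ 2 + 1 = 3 - 2 * 2 + 1] (mod int p ^ k)"
      using s(2) t(2) by (intro cong_add cong_diff cong_scalar_left cong_refl)
    moreover have "[s k ^ 2 - 2 = 2 - 2] (mod int p ^ k)"
      using s(2) by (intro cong_diff cong_refl)
    moreover have "[1 + r k ^ 2 = 1 + -1] (mod int p ^ k)"
      using r(2) by (intro cong_add cong_refl)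
    ultimately show ?thesis
      by (simp add: x_def on_C_D_mod_def)
  qed
  ultimately show ?thesis
    unfolding C_D_has_Qp_point_iff by (intro exI[of _ x] conjI exI[of _ 2]) auto
qed

theorem lemma4p5:
  fixes D :: int and p :: nat
  assumes "squarefree D" and "prime p" and "p > 3" and "int p dvd D"
  shows "C_D_has_Qp_point D p \<longleftrightarrow> [p = 1] (mod 24)"
  using C_D_has_Qp_point_imp_QuadRes[OF assms(1,2,4)] QuadRes_imp_C_D_has_Qp_point[OF assms(2,3)]
    QuadRes_minus_one_two_three_iff_cong_1_mod_24[OF assms(2,3)] by blast

end
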